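(* Let $n$ be a positive integer and let $x$ be a complex number such that no denominator below vanishes. Then \[ \sum_{k=0}^{n}(-1)^k\binom{n}{k}\frac{\binom{2x+k}{k}}{\binom{2x+n+k}{k}} \frac{1+2x+2k}{1+2x+n+k}H_{k}^2(x) =\frac{1}{2n}\frac{\binom{2x+n}{n}}{\binom{x+n}{n}^2}\big\{H_{n-1}-H_{n}(x)\big\}, \] where $H_k^2(x)$ denotes $(H_k(x))^2$.
   Context: For complex $z$ and a nonnegative integer $k$, $\binom{z}{k}=\frac{z(z-1)\cdots(z-k+1)}{k!}$ (with $\binom{z}{0}=1$). For complex $x$ and nonnegative integer $m$, $H_0(x)=0$ and $H_m(x)=\sum_{j=1}^m\frac{1}{x+j}$; $H_m=H_m(0)=\sum_{j=1}^m\frac1j$. The parameter $x$ is assumed to be such that all denominators are nonzero. *)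

theory Defs
  imports Complex_Main
begin

definition Hx :: "nat \<Rightarrow> complex \<Rightarrow> complex" where
  "Hx m x = (\<Sum>j=1..m. 1 / (x + of_nat j))"

end

theory Submission
  imports Defs "HOL-Computational_Algebra.Polynomial"
begin

text \<open>
  Dougall's \<open>\<^sub>5F\<^sub>4\<close> summation with two equal numerator parameters states, for \<open>b = 1 + a - d\<close>,
    \<open>\<Sum>k. (-1)^k C(n,k) (a)_k (a+2k) (b)_k^2 / ((d)_k^2 (1+a+n)_k) = (a)_(n+1) (d-b)_n / (d)_n^2\<close>;
  it is proved by induction on \<open>n\<close> with a Wilf-Zeilberger certificate. Putting \<open>a = 2x+1\<close>,
  \<open>b = x+1+t\<close>, \<open>d = x+1-t\<close> and clearing \<open>(d)_n^2\<close> turns it into a polynomial identity in \<open>t\<close>,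
    \<open>\<Sum>k. c_k W_k(t)^2 = (2x+1)_n (-2t)_n\<close>,  where  \<open>W_k(t) = (x+1+t)_k (x+1+k-t)_(n-k)\<close>
  and \<open>c_k\<close> is the coefficient in the theorem. As \<open>W_k(t) = (x+1)_n (1 + (2 H_k(x) - H_n(x)) t + O(t^2))\<close>,
  comparing the coefficients of \<open>1\<close>, \<open>t\<close> and \<open>t^2\<close> determines \<open>\<Sum>k. c_k\<close>, \<open>\<Sum>k. c_k H_k(x)\<close> and
  \<open>\<Sum>k. c_k H_k(x)^2\<close>. The extra conditions on \<open>x\<close> used on the way fail only at finitely many points,
  so they are removed by continuity in \<open>x\<close>.
\<close>

lemma of_nat_choose_Suc_diff_mult:
  "(of_nat (Suc n choose k) - of_nat (n choose k) :: 'a :: comm_ring_1) * (of_nat n + 1 - of_nat k)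
     = of_nat (n choose k) * of_nat k"
proof (cases "k \<le> Suc n")
  case True
  have "(Suc n - k) * (Suc n choose k) = Suc n * (n choose k)"
    using binomial_absorb_comp[of "Suc n" k] by simp
  then have "of_nat (Suc n - k) * of_nat (Suc n choose k) = (of_nat (Suc n) * of_nat (n choose k) :: 'a)"
    by (metis of_nat_mult)
  then have "(of_nat n + 1 - of_nat k) * of_nat (Suc n choose k) = (of_nat n + 1 :: 'a) * of_nat (n choose k)"
    using True by (simp add: of_nat_diff add.commute)
  then show ?thesis by (simp add: algebra_simps)
next
  case False
  then show ?thesis by (simp add: binomial_eq_0)
qed

lemma pochhammer_shift:
  "pochhammer z k * (z + of_nat k) = z * pochhammer (z + 1) k"
  by (metis pochhammer_rec pochhammer_rec' mult.commute)

lemma pochhammer_neq_0_if: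
  assumes "\<And>i. i < k \<Longrightarrow> z + of_nat i \<noteq> (0 :: 'a :: idom)"
  shows "pochhammer z k \<noteq> 0"
  unfolding pochhammer_prod using assms by simp

lemma tendsto_pochhammer:
  fixes h :: "'a \<Rightarrow> 'b :: {real_normed_field}"
  assumes "(h \<longlongrightarrow> c) F"
  shows "((\<lambda>y. pochhammer (h y) k) \<longlongrightarrow> pochhammer c k) F"
  unfolding pochhammer_prod by (intro tendsto_intros assms)

lemma poly_eqI_cofinite:
  fixes p q :: "'a :: {idom, ring_char_0} poly"
  assumes "finite B" and "\<And>t. t \<notin> B \<Longrightarrow> poly p t = poly q t"
  shows "p = q"
proof (rule ccontr)
  assume "p \<noteq> q"
  then have "finite {t. poly (p - q) t = 0}" by (intro poly_roots_finite) simp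
  moreover have "- B \<subseteq> {t. poly (p - q) t = 0}" using assms(2) by auto
  moreover have "infinite (- B)" using assms(1) infinite_UNIV_char_0 by (simp add: Compl_eq_Diff_UNIV)
  ultimately show False by (meson infinite_super)
qed

lemma coeff_prod_linear_012:
  fixes \<alpha> \<beta> :: "'i \<Rightarrow> 'a :: field_char_0"
  assumes "finite S" "\<And>j. j \<in> S \<Longrightarrow> \<alpha> j \<noteq> 0"
  shows "coeff (\<Prod>j\<in>S. [:\<alpha> j, \<beta> j:]) 0 = (\<Prod>j\<in>S. \<alpha> j)
       \<and> coeff (\<Prod>j\<in>S. [:\<alpha> j, \<beta> j:]) 1 = (\<Prod>j\<in>S. \<alpha> j) * (\<Sum>j\<in>S. \<beta> j / \<alpha> j)
       \<and> coeff (\<Prod>j\<in>S. [:\<alpha> j, \<beta> j:]) 2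
           = (\<Prod>j\<in>S. \<alpha> j) * ((\<Sum>j\<in>S. \<beta> j / \<alpha> j)^2 - (\<Sum>j\<in>S. (\<beta> j / \<alpha> j)^2)) / 2"
  using assms
proof (induction S rule: finite_induct)
  case empty
  then show ?case by simp
next
  case (insert i S)
  define p where "p = (\<Prod>j\<in>S. [:\<alpha> j, \<beta> j:])"
  define P where "P = (\<Prod>j\<in>S. \<alpha> j)"
  define s where "s = (\<Sum>j\<in>S. \<beta> j / \<alpha> j)"
  define q where "q = (\<Sum>j\<in>S. (\<beta> j / \<alpha> j)^2)"
  have IH: "coeff p 0 = P" "coeff p 1 = P * s" "coeff p 2 = P * (s^2 - q) / 2"
    using insert unfolding p_def P_def s_def q_def by auto
  have e: "(\<Prod>j\<in>insert i S. [:\<alpha> j, \<beta> j:]) = smult (\<alpha> i) p + pCons 0 (smult (\<beta> i) p)"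
    using insert unfolding p_def by simp
  have c0: "coeff (\<Prod>j\<in>insert i S. [:\<alpha> j, \<beta> j:]) 0 = \<alpha> i * P"
    unfolding e using IH by simp
  have c1: "coeff (\<Prod>j\<in>insert i S. [:\<alpha> j, \<beta> j:]) 1 = \<alpha> i * (P * s) + \<beta> i * P"
    unfolding e using IH by (simp add: coeff_pCons One_nat_def)
  have c2: "coeff (\<Prod>j\<in>insert i S. [:\<alpha> j, \<beta> j:]) 2 = \<alpha> i * (P * (s^2 - q) / 2) + \<beta> i * (P * s)"
    unfolding e numeral_2_eq_2 using IH by (simp add: numeral_2_eq_2)
  have insert_sums: "(\<Prod>j\<in>insert i S. \<alpha> j) = \<alpha> i * P" "(\<Sum>j\<in>insert i S. \<beta> j / \<alpha> j) = \<beta> i / \<alpha> i + s"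
    "(\<Sum>j\<in>insert i S. (\<beta> j / \<alpha> j)^2) = (\<beta> i / \<alpha> i)^2 + q"
    using insert unfolding P_def s_def q_def by simp_all
  have "\<alpha> i \<noteq> 0" using insert by auto
  then show ?case unfolding c0 c1 c2 insert_sums
    by (simp add: field_simps power2_eq_square)
qed

lemma coeff_power2_012:
  fixes w :: "'a :: field_char_0 poly"
  assumes "coeff w 0 = P" "coeff w 1 = P * s" "coeff w 2 = P * (s^2 - q) / 2"
  shows "coeff (w^2) 0 = P^2 \<and> coeff (w^2) 1 = 2 * P^2 * s \<and> coeff (w^2) 2 = P^2 * (2 * s^2 - q)"
proof -
  have sq: "coeff (w^2) m = (\<Sum>i\<le>m. coeff w i * coeff w (m - i))" for m
    unfolding power2_eq_square coeff_mult ..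
  have "coeff (w^2) 2 = coeff w 0 * coeff w 2 + coeff w 1 * coeff w 1 + coeff w 2 * coeff w 0"
    unfolding sq by (simp add: numeral_2_eq_2 atMost_Suc)
  also have "\<dots> = P^2 * (2 * s^2 - q)"
    unfolding assms by (simp add: power2_eq_square field_simps)
  finally show ?thesis
    using assms unfolding sq by (simp add: atMost_Suc power2_eq_square)
qed

lemma eventually_at_notin_finite:
  fixes x :: "'a :: t1_space"
  assumes "finite B"
  shows "eventually (\<lambda>y. y \<notin> B) (at x)"
proof -
  have "eventually (\<lambda>y. \<forall>b\<in>B. y \<noteq> b) (at x)"
    by (rule eventually_ball_finite[OF assms]) (auto intro: eventually_neq_at_within)
  then show ?thesis by (rule eventually_mono) auto
qed

lemma eq_if_eventually_eq_at:
  fixes f g :: "'a :: perfect_space \<Rightarrow> 'b :: t2_space"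
  assumes "eventually (\<lambda>y. f y = g y) (at x)" "(f \<longlongrightarrow> f x) (at x)" "(g \<longlongrightarrow> g x) (at x)"
  shows "f x = g x"
  using tendsto_cong[OF assms(1)] assms(2,3) by (metis tendsto_unique at_neq_bot)

section \<open>Dougall's summation\<close>

definition dougall_summand :: "complex \<Rightarrow> complex \<Rightarrow> complex \<Rightarrow> nat \<Rightarrow> nat \<Rightarrow> complex" where
  "dougall_summand a b d n k = (-1)^k * of_nat (n choose k) * pochhammer a k * (a + 2 * of_nat k)
     * pochhammer b k ^ 2 / (pochhammer d k ^ 2 * pochhammer (1 + a + of_nat n) k)"

definition dougall_kernel :: "complex \<Rightarrow> complex \<Rightarrow> complex \<Rightarrow> nat \<Rightarrow> nat \<Rightarrow> complex" where
  "dougall_kernel a b d n k = (-1)^k * pochhammer a k * pochhammer b k ^ 2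
     / (pochhammer d k ^ 2 * pochhammer (2 + a + of_nat n) k)"

text \<open>\<open>C(n+1,k) - C(n,k)\<close> is \<open>C(n,k-1)\<close>, written this way to avoid the truncated \<open>k - 1\<close>.\<close>

definition dougall_certificate :: "complex \<Rightarrow> complex \<Rightarrow> complex \<Rightarrow> nat \<Rightarrow> nat \<Rightarrow> complex" where
  "dougall_certificate a b d n k = - dougall_kernel a b d n k
     * (of_nat (Suc n choose k) - of_nat (n choose k)) * (d + of_nat k - 1)^2 * (1 + a + of_nat n + of_nat k)
     / (of_nat n + d)^2"

lemma dougall_wz_identity:
  fixes a b d c c' n k :: "'a :: idom"
  assumes b: "b = 1 + a - d" and c': "c' * (n + 1 - k) = c * k"
    and c'_0: "k = 0 \<Longrightarrow> c' = 0" and c_0: "k = n + 1 \<Longrightarrow> c = 0"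
  shows "(c + c') * (a + 2*k) * (n + d)^2 - c * (a + 2*k) * (d - b + n) * (1 + a + n + k)
      = c * (a + k) * (b + k)^2 + c' * (d + k - 1)^2 * (1 + a + n + k)"
proof -
  define F where "F = (a + 2*k) * (n + d)^2 - (d + k - 1)^2 * (1 + a + n + k)"
  define G where "G = (a + 2*k) * (n + d)^2 - (a + 2*k) * (d - b + n) * (1 + a + n + k)
                      - (a + k) * (b + k)^2"
  have FG: "(n + 1 - k) * G + k * F = 0"
    unfolding F_def G_def b by algebra
  have G_0: "G = 0" if "k = 0"
    unfolding G_def b that by algebra
  have F_0: "F = 0" if "k = n + 1"
    unfolding F_def that by algebra
  have "c * G + c' * F = 0"
  proof (cases "k = 0 \<or> k = n + 1")
    case True
    then show ?thesis using c'_0 c_0 G_0 F_0 by auto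
  next
    case False
    then have "n + 1 - k \<noteq> 0" by auto
    moreover have "(n + 1 - k) * (c * G + c' * F) = c * ((n + 1 - k) * G + k * F)"
      using c' by algebra
    ultimately show ?thesis using FG by simp
  qed
  then show ?thesis unfolding F_def G_def by algebra
qed

lemma dougall_summand_Suc:
  "dougall_summand a b d (Suc n) k
     = dougall_kernel a b d n k * of_nat (Suc n choose k) * (a + 2 * of_nat k)"
proof -
  have "1 + a + of_nat (Suc n) = 2 + a + of_nat n" by simp
  then show ?thesis unfolding dougall_summand_def dougall_kernel_def by (simp add: field_simps)
qed

lemma dougall_summand_eq_kernel:
  assumes "1 + a + of_nat n \<noteq> 0" "1 + a + of_nat n + of_nat k \<noteq> 0"
  shows "dougall_summand a b d n k = dougall_kernel a b d n k * of_nat (n choose k) * (a + 2 * of_nat k)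
           * (1 + a + of_nat n + of_nat k) / (1 + a + of_nat n)"
proof -
  have "pochhammer (1 + a + of_nat n) k
          = (1 + a + of_nat n) * pochhammer (2 + a + of_nat n) k / (1 + a + of_nat n + of_nat k)"
    using pochhammer_shift[of "1 + a + of_nat n" k] assms(2)
    by (simp add: field_simps add_ac)
  then show ?thesis
    unfolding dougall_summand_def dougall_kernel_def using assms
    by (simp add: divide_inverse inverse_mult_distrib mult_ac)
qed

lemma dougall_kernel_Suc:
  "dougall_kernel a b d n (Suc k) = - dougall_kernel a b d n k * (a + of_nat k) * (b + of_nat k)^2
     / ((d + of_nat k)^2 * (2 + a + of_nat n + of_nat k))"
  unfolding dougall_kernel_def pochhammer_rec'
  by (simp add: divide_inverse inverse_mult_distrib power_mult_distrib mult_ac add_ac)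

lemma dougall_certificate_Suc:
  assumes "d + of_nat k \<noteq> 0" "2 + a + of_nat n + of_nat k \<noteq> 0"
  shows "dougall_certificate a b d n (Suc k)
       = dougall_kernel a b d n k * of_nat (n choose k) * (a + of_nat k) * (b + of_nat k)^2 / (of_nat n + d)^2"
proof -
  have "- (- M * A * B^2 / (D^2 * Q)) * c * D^2 * Q / N = M * c * A * B^2 / N"
    if "D \<noteq> 0" "Q \<noteq> 0" for M A B D Q c N :: complex
    using that by (simp add: field_simps)
  from this[OF assms] show ?thesis
    unfolding dougall_certificate_def dougall_kernel_Suc by (simp add: add_ac)
qed

lemma dougall_summand_recurrence:
  assumes b: "b = 1 + a - d"
    and dk: "d + of_nat k \<noteq> 0" and ank: "2 + a + of_nat n + of_nat k \<noteq> 0"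
    and an: "1 + a + of_nat n \<noteq> 0" and ank': "1 + a + of_nat n + of_nat k \<noteq> 0"
    and nd: "of_nat n + d \<noteq> 0"
  shows "dougall_summand a b d (Suc n) k
       = (1 + a + of_nat n) * (d - b + of_nat n) / (of_nat n + d)^2 * dougall_summand a b d n k
         + (dougall_certificate a b d n (Suc k) - dougall_certificate a b d n k)"
proof -
  define M where "M = dougall_kernel a b d n k"
  define c where "c = (of_nat (n choose k) :: complex)"
  define c' where "c' = of_nat (Suc n choose k) - c"
  have cert: "dougall_certificate a b d n k
      = - M * c' * (d + of_nat k - 1)^2 * (1 + a + of_nat n + of_nat k) / (of_nat n + d)^2"
    unfolding dougall_certificate_def M_def c'_def c_def ..
  have wz: "(c + c') * (a + 2 * of_nat k) * (of_nat n + d)^2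
        - c * (a + 2 * of_nat k) * (d - b + of_nat n) * (1 + a + of_nat n + of_nat k)
      = c * (a + of_nat k) * (b + of_nat k)^2 + c' * (d + of_nat k - 1)^2 * (1 + a + of_nat n + of_nat k)"
  proof (rule dougall_wz_identity[OF b])
    show "c' * (of_nat n + 1 - of_nat k) = c * of_nat k"
      unfolding c'_def c_def by (rule of_nat_choose_Suc_diff_mult)
    show "c' = 0" if "(of_nat k :: complex) = 0"
      using that unfolding c'_def c_def by simp
    show "c = 0" if "(of_nat k :: complex) = of_nat n + 1"
    proof -
      have "k = Suc n" using that by (metis of_nat_Suc of_nat_eq_iff add.commute)
      then show ?thesis unfolding c_def by simp
    qed
  qed
  have "M * (c + c') * A = R * Y / N^2 * (M * c * A * Z / R) + (M * c * X1 * X2 / N^2 - - M * c' * W * Z / N^2)"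
    if "R \<noteq> 0" "N \<noteq> 0" "(c + c') * A * N^2 - c * A * Y * Z = c * X1 * X2 + c' * W * Z"
    for R N Y Z A X1 X2 W
    using that by (simp add: field_simps) algebra
  moreover have "of_nat (Suc n choose k) = c + c'"
    unfolding c'_def by simp
  ultimately show ?thesis
    using an nd wz
    unfolding dougall_summand_Suc dougall_summand_eq_kernel[OF an ank'] dougall_certificate_Suc[OF dk ank] cert
      M_def[symmetric] c_def[symmetric]
    by simp
qed

lemma sum_dougall_certificate_telescope:
  "(\<Sum>k=0..Suc n. dougall_certificate a b d n (Suc k) - dougall_certificate a b d n k) = 0"
  by (subst sum_Suc_diff) (simp_all add: dougall_certificate_def)

lemma dougall_rhs_Suc:
  fixes a b d :: complex
  assumes "of_nat n + d \<noteq> 0" "pochhammer d n \<noteq> 0"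
  shows "(1 + a + of_nat n) * (d - b + of_nat n) / (of_nat n + d)^2
           * (pochhammer a (Suc n) * pochhammer (d - b) n / pochhammer d n ^ 2)
       = pochhammer a (Suc (Suc n)) * pochhammer (d - b) (Suc n) / pochhammer d (Suc n) ^ 2"
proof -
  have rec: "pochhammer a (Suc (Suc n)) = (1 + a + of_nat n) * pochhammer a (Suc n)"
    "pochhammer (d - b) (Suc n) = (d - b + of_nat n) * pochhammer (d - b) n"
    "pochhammer d (Suc n) = (of_nat n + d) * pochhammer d n"
    by (simp_all only: pochhammer_rec'[of _ "Suc n"] pochhammer_rec'[of _ n]) (simp_all add: add_ac)
  have "A * B / N^2 * (X * Y / Z^2) = (A * X) * (B * Y) / (N * Z)^2"
    if "N \<noteq> 0" "Z \<noteq> 0" for A B X Y N Z :: complex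
    using that by (simp add: field_simps)
  from this[OF assms] show ?thesis unfolding rec .
qed

lemma dougall_summation:
  assumes b: "b = 1 + a - d"
    and d: "\<And>m. m \<le> 2 * n \<Longrightarrow> d + of_nat m \<noteq> 0"
    and a: "\<And>m. m \<le> 2 * n \<Longrightarrow> 1 + a + of_nat m \<noteq> 0"
  shows "(\<Sum>k=0..n. dougall_summand a b d n k)
           = pochhammer a (Suc n) * pochhammer (d - b) n / pochhammer d n ^ 2"
  using d a
proof (induction n)
  case 0
  then show ?case by (simp add: dougall_summand_def)
next
  case (Suc n)
  have d': "d + of_nat m \<noteq> 0" "1 + a + of_nat m \<noteq> 0" if "m \<le> 2 * n + 2" for m
    using Suc.prems that by auto
  define \<rho> where "\<rho> = (1 + a + of_nat n) * (d - b + of_nat n) / (of_nat n + d)^2"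
  have nd: "of_nat n + d \<noteq> 0" using d'(1)[of n] by (simp add: add.commute)
  have step: "dougall_summand a b d (Suc n) k
      = \<rho> * dougall_summand a b d n k
        + (dougall_certificate a b d n (Suc k) - dougall_certificate a b d n k)"
    if "k \<le> Suc n" for k
    unfolding \<rho>_def
  proof (rule dougall_summand_recurrence[OF b _ _ _ _ nd])
    show "d + of_nat k \<noteq> 0" using d'(1)[of k] that by simp
    show "2 + a + of_nat n + of_nat k \<noteq> 0" "1 + a + of_nat n + of_nat k \<noteq> 0" "1 + a + of_nat n \<noteq> 0"
      using d'(2)[of "Suc (n + k)"] d'(2)[of "n + k"] d'(2)[of n] that by (simp_all add: add_ac)
  qed
  have "(\<Sum>k=0..Suc n. dougall_summand a b d (Suc n) k)
      = (\<Sum>k=0..Suc n. \<rho> * dougall_summand a b d n k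
          + (dougall_certificate a b d n (Suc k) - dougall_certificate a b d n k))"
    by (rule sum.cong) (simp_all add: step)
  also have "\<dots> = \<rho> * (\<Sum>k=0..Suc n. dougall_summand a b d n k)
        + (\<Sum>k=0..Suc n. dougall_certificate a b d n (Suc k) - dougall_certificate a b d n k)"
    by (simp only: sum.distrib sum_distrib_left)
  also have "(\<Sum>k=0..Suc n. dougall_certificate a b d n (Suc k) - dougall_certificate a b d n k) = 0"
    by (rule sum_dougall_certificate_telescope)
  also have "(\<Sum>k=0..Suc n. dougall_summand a b d n k) = (\<Sum>k=0..n. dougall_summand a b d n k)"
    by (simp add: dougall_summand_def)
  also have "\<dots> = pochhammer a (Suc n) * pochhammer (d - b) n / pochhammer d n ^ 2"
    using Suc.IH Suc.prems by simp
  also have "\<rho> * \<dots> + 0 = pochhammer a (Suc (Suc n)) * pochhammer (d - b) (Suc n) / pochhammer d (Suc n) ^ 2"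
  proof -
    have "pochhammer d n \<noteq> 0"
      by (rule pochhammer_neq_0_if) (use d' in simp)
    then show ?thesis unfolding \<rho>_def add_0_right by (rule dougall_rhs_Suc[OF nd])
  qed
  finally show ?case .
qed

section \<open>Specialisation to a polynomial identity in t\<close>

definition dougall_coeff :: "complex \<Rightarrow> nat \<Rightarrow> nat \<Rightarrow> complex" where
  "dougall_coeff x n k = (-1)^k * of_nat (n choose k) * pochhammer (2*x + 1) k * (2*x + 1 + 2 * of_nat k)
      / pochhammer (2*x + 1 + of_nat n) (Suc k)"

definition dougall_poly :: "complex \<Rightarrow> nat \<Rightarrow> nat \<Rightarrow> complex poly" where
  "dougall_poly x n k = (\<Prod>i=0..<n. [:x + 1 + of_nat i, if i < k then 1 else -1:])"

lemma poly_dougall_poly: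
  assumes "k \<le> n"
  shows "poly (dougall_poly x n k) t = pochhammer (x + 1 + t) k * pochhammer (x + 1 - t + of_nat k) (n - k)"
proof -
  have "poly (dougall_poly x n k) t = (\<Prod>i=0..<n. x + 1 + of_nat i + t * (if i < k then 1 else -1))"
    unfolding dougall_poly_def poly_prod by (simp add: algebra_simps)
  also have "\<dots> = (\<Prod>i=0..<k. x + 1 + of_nat i + t * (if i < k then 1 else -1))
                   * (\<Prod>i=k..<n. x + 1 + of_nat i + t * (if i < k then 1 else -1))"
    by (rule prod.atLeastLessThan_concat[symmetric]) (use assms in auto)
  also have "(\<Prod>i=0..<k. x + 1 + of_nat i + t * (if i < k then 1 else -1)) = pochhammer (x + 1 + t) k"
    unfolding pochhammer_prod by (intro prod.cong) (auto simp: algebra_simps)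
  also have "(\<Prod>i=k..<n. x + 1 + of_nat i + t * (if i < k then 1 else -1))
               = (\<Prod>i=0..<n - k. x + 1 - t + of_nat k + of_nat i)"
    using prod.shift_bounds_nat_ivl[of "\<lambda>i. x + 1 - t + of_nat i" 0 k "n - k"] assms
    by (simp add: algebra_simps)
  also have "\<dots> = pochhammer (x + 1 - t + of_nat k) (n - k)"
    unfolding pochhammer_prod atLeast0LessThan ..
  finally show ?thesis .
qed

lemma dougall_summand_eq_dougall_coeff:
  assumes k: "k \<le> n" and d: "pochhammer (x + 1 - t) n \<noteq> 0" and a: "2*x + 1 + of_nat n \<noteq> 0"
  shows "dougall_summand (2*x + 1) (x + 1 + t) (x + 1 - t) n k * pochhammer (x + 1 - t) n ^ 2
       = (2*x + 1 + of_nat n) * (dougall_coeff x n k * poly (dougall_poly x n k) t ^ 2)"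
proof -
  define Q where "Q = pochhammer (x + 1 - t + of_nat k) (n - k)"
  have d_split: "pochhammer (x + 1 - t) n = pochhammer (x + 1 - t) k * Q"
    unfolding Q_def by (rule pochhammer_product[OF k])
  with d have dk: "pochhammer (x + 1 - t) k \<noteq> 0" by auto
  have "pochhammer (2*x + 1 + of_nat n) (Suc k) = (2*x + 1 + of_nat n) * pochhammer (1 + (2*x + 1) + of_nat n) k"
    unfolding pochhammer_rec by (simp add: add_ac)
  then have wp: "dougall_coeff x n k = (-1)^k * of_nat (n choose k) * pochhammer (2*x + 1) k * (2*x + 1 + 2 * of_nat k)
      / ((2*x + 1 + of_nat n) * pochhammer (1 + (2*x + 1) + of_nat n) k)"
    unfolding dougall_coeff_def by simp
  have "s * C * A * B^2 / (D^2 * R) * (D * Q)^2 = N * (s * C * A / (N * R) * (B * Q)^2)"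
    if "D \<noteq> 0" "N \<noteq> 0" for s C A B D N R :: complex
    using that by (simp add: field_simps)
  from this[OF dk a] show ?thesis
    unfolding dougall_summand_def d_split poly_dougall_poly[OF k] wp Q_def[symmetric] .
qed

lemma sum_dougall_coeff_poly_eval:
  assumes n: "n \<ge> 1"
    and x: "\<And>m. m \<le> 2 * n \<Longrightarrow> 2 + 2*x + of_nat m \<noteq> 0"
    and t: "\<And>m. m \<le> 2 * n \<Longrightarrow> x + 1 - t + of_nat m \<noteq> 0"
  shows "(\<Sum>k=0..n. dougall_coeff x n k * poly (dougall_poly x n k) t ^ 2)
           = pochhammer (2*x + 1) n * pochhammer (-2*t) n"
proof -
  have a: "2*x + 1 + of_nat n \<noteq> 0"
    using x[of "n - 1"] n by (simp add: of_nat_diff algebra_simps)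
  have d: "pochhammer (x + 1 - t) n \<noteq> 0"
    by (rule pochhammer_neq_0_if) (use t in simp)
  have "(2*x + 1 + of_nat n) * (\<Sum>k=0..n. dougall_coeff x n k * poly (dougall_poly x n k) t ^ 2)
      = (\<Sum>k=0..n. dougall_summand (2*x + 1) (x + 1 + t) (x + 1 - t) n k) * pochhammer (x + 1 - t) n ^ 2"
    by (simp add: sum_distrib_left sum_distrib_right dougall_summand_eq_dougall_coeff[OF _ d a])
  also have "\<dots> = pochhammer (2*x + 1) (Suc n) * pochhammer (-2*t) n"
    using d by (subst dougall_summation) (use x t in \<open>auto simp: algebra_simps\<close>)
  also have "\<dots> = (2*x + 1 + of_nat n) * (pochhammer (2*x + 1) n * pochhammer (-2*t) n)"
    by (simp add: pochhammer_rec')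
  finally show ?thesis using a by simp
qed

lemma sum_dougall_coeff_poly:
  assumes n: "n \<ge> 1" and x: "\<And>m. m \<le> 2 * n \<Longrightarrow> 2 + 2*x + of_nat m \<noteq> 0"
  shows "(\<Sum>k=0..n. smult (dougall_coeff x n k) (dougall_poly x n k ^ 2))
       = smult (pochhammer (2*x + 1) n) (\<Prod>i=0..<n. [:of_nat i, -2:])"
proof (rule poly_eqI_cofinite)
  show "finite ((\<lambda>m. x + 1 + of_nat m) ` {..2 * n})" by simp
  fix t assume "t \<notin> (\<lambda>m. x + 1 + of_nat m) ` {..2 * n}"
  then have t: "x + 1 - t + of_nat m \<noteq> 0" if "m \<le> 2 * n" for m
    using that by (auto simp: algebra_simps eq_neg_iff_add_eq_0[symmetric])
  have "poly (\<Prod>i=0..<n. [:of_nat i, -2:]) t = pochhammer (-2*t) n"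
    unfolding poly_prod pochhammer_prod by (intro prod.cong) (auto simp: algebra_simps)
  then show "poly (\<Sum>k=0..n. smult (dougall_coeff x n k) (dougall_poly x n k ^ 2)) t
       = poly (smult (pochhammer (2*x + 1) n) (\<Prod>i=0..<n. [:of_nat i, -2:])) t"
    using sum_dougall_coeff_poly_eval[OF n x t] by (simp add: poly_sum)
qed

section \<open>Comparing coefficients\<close>

lemma Hx_eq_sum: "Hx k x = (\<Sum>i=0..<k. 1 / (x + 1 + of_nat i))"
  by (induction k) (auto simp: Hx_def algebra_simps)

lemma dougall_poly_sq_coeffs:
  assumes k: "k \<le> n" and x: "\<And>i. i < n \<Longrightarrow> x + 1 + of_nat i \<noteq> 0"
  defines "s \<equiv> 2 * Hx k x - Hx n x" and "\<sigma> \<equiv> \<Sum>i=0..<n. (1 / (x + 1 + of_nat i))^2"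
  shows "coeff (dougall_poly x n k ^ 2) 0 = pochhammer (x + 1) n ^ 2
       \<and> coeff (dougall_poly x n k ^ 2) 1 = 2 * pochhammer (x + 1) n ^ 2 * s
       \<and> coeff (dougall_poly x n k ^ 2) 2 = pochhammer (x + 1) n ^ 2 * (2 * s^2 - \<sigma>)"
proof -
  define \<beta> where "\<beta> i = (if i < k then 1 else -1 :: complex)" for i
  have split: "(\<Sum>i=0..<n. f i) = (\<Sum>i=0..<k. f i) + (\<Sum>i=k..<n. f i)" for f :: "nat \<Rightarrow> complex"
    by (rule sum.atLeastLessThan_concat[symmetric]) (use k in auto)
  have "(\<Sum>i=0..<n. \<beta> i / (x + 1 + of_nat i)) = s"
    using split[of "\<lambda>i. \<beta> i / (x + 1 + of_nat i)"] split[of "\<lambda>i. 1 / (x + 1 + of_nat i)"]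
    unfolding s_def Hx_eq_sum \<beta>_def by (simp add: sum_negf[symmetric])
  moreover have "(\<Sum>i=0..<n. (\<beta> i / (x + 1 + of_nat i))^2) = \<sigma>"
    unfolding \<sigma>_def \<beta>_def by (intro sum.cong) (auto simp: power_divide)
  moreover have "(\<Prod>i=0..<n. x + 1 + of_nat i) = pochhammer (x + 1) n"
    unfolding pochhammer_prod ..
  ultimately show ?thesis
    using coeff_prod_linear_012[of "{0..<n}" "\<lambda>i. x + 1 + of_nat i" \<beta>] x
    unfolding dougall_poly_def \<beta>_def[symmetric]
    by (intro coeff_power2_012) auto
qed

lemma coeff_prod_pochhammer_minus_two:
  shows "coeff (\<Prod>i=0..<Suc m. [:of_nat i, -2 :: complex:]) 0 = 0"
    and "coeff (\<Prod>i=0..<Suc m. [:of_nat i, -2 :: complex:]) 1 = -2 * fact m"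
    and "coeff (\<Prod>i=0..<Suc m. [:of_nat i, -2 :: complex:]) 2 = 4 * fact m * Hx m 0"
proof -
  define Q where "Q = (\<Prod>i=1..<Suc m. [:of_nat i, -2 :: complex:])"
  have "(\<Prod>i=0..<Suc m. [:of_nat i, -2 :: complex:]) = [:0, -2:] * Q"
    unfolding Q_def by (subst prod.atLeast_Suc_lessThan) auto
  moreover have "coeff Q 0 = (\<Prod>i=1..<Suc m. of_nat i)"
    "coeff Q 1 = (\<Prod>i=1..<Suc m. of_nat i) * (\<Sum>i=1..<Suc m. -2 / of_nat i)"
    using coeff_prod_linear_012[of "{1..<Suc m}" of_nat "\<lambda>_. -2 :: complex"]
    unfolding Q_def by auto
  moreover have "(\<Prod>i=1..<Suc m. of_nat i :: complex) = fact m"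
    by (induction m) (auto simp: prod.atLeastLessThan_Suc)
  moreover have "(\<Sum>i=1..<Suc m. -2 / of_nat i :: complex) = -2 * Hx m 0"
    by (induction m) (auto simp: sum.atLeastLessThan_Suc Hx_def algebra_simps)
  ultimately show "coeff (\<Prod>i=0..<Suc m. [:of_nat i, -2 :: complex:]) 0 = 0"
    "coeff (\<Prod>i=0..<Suc m. [:of_nat i, -2 :: complex:]) 1 = -2 * fact m"
    "coeff (\<Prod>i=0..<Suc m. [:of_nat i, -2 :: complex:]) 2 = 4 * fact m * Hx m 0"
    by (simp_all add: numeral_2_eq_2)
qed

lemma dougall_coeff_moments:
  assumes n: "n = Suc m"
    and x2: "\<And>j. j \<le> 2 * n \<Longrightarrow> 2 + 2*x + of_nat j \<noteq> 0"
    and x1: "\<And>i. i < n \<Longrightarrow> x + 1 + of_nat i \<noteq> 0"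
  shows "(\<Sum>k=0..n. dougall_coeff x n k) = 0"
    and "(\<Sum>k=0..n. dougall_coeff x n k * (2 * Hx k x - Hx n x))
           = - pochhammer (2*x + 1) n * fact m / pochhammer (x + 1) n ^ 2"
    and "(\<Sum>k=0..n. dougall_coeff x n k * (2 * Hx k x - Hx n x) ^ 2)
           = 2 * pochhammer (2*x + 1) n * fact m * Hx m 0 / pochhammer (x + 1) n ^ 2"
proof -
  define s where "s k = 2 * Hx k x - Hx n x" for k
  define P where "P = pochhammer (x + 1) n"
  define A where "A = pochhammer (2*x + 1) n"
  define \<sigma> where "\<sigma> = (\<Sum>i=0..<n. (1 / (x + 1 + of_nat i))^2)"
  define S where "S f = (\<Sum>k=0..n. dougall_coeff x n k * f k)" for f
  have n1: "n \<ge> 1" using n by simp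
  have P: "P \<noteq> 0"
    unfolding P_def by (rule pochhammer_neq_0_if) (use x1 in \<open>simp add: add_ac\<close>)
  have coeffs: "S (\<lambda>k. coeff (dougall_poly x n k ^ 2) j)
      = A * coeff (\<Prod>i=0..<Suc m. [:of_nat i, -2:]) j" for j
    using arg_cong[OF sum_dougall_coeff_poly[OF n1 x2], of "\<lambda>p. coeff p j"] n
    unfolding S_def A_def by (simp add: coeff_sum)
  have W: "coeff (dougall_poly x n k ^ 2) 0 = P^2" "coeff (dougall_poly x n k ^ 2) 1 = 2 * P^2 * s k"
    "coeff (dougall_poly x n k ^ 2) 2 = P^2 * (2 * s k ^ 2 - \<sigma>)" if "k \<in> {0..n}" for k
    using dougall_poly_sq_coeffs[of k n x] that x1 unfolding P_def s_def \<sigma>_def by auto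
  have S_cong: "S f = S g" if "\<And>k. k \<in> {0..n} \<Longrightarrow> f k = g k" for f g
    unfolding S_def using that by simp
  have S_const: "S (\<lambda>k. c * f k) = c * S f" for c f
    unfolding S_def by (simp add: sum_distrib_left mult_ac)
  have "S (\<lambda>k. coeff (dougall_poly x n k ^ 2) 0) = P^2 * S (\<lambda>_. 1)"
    unfolding S_const[symmetric] by (rule S_cong) (simp add: W)
  then have "P^2 * S (\<lambda>_. 1) = 0"
    using coeffs[of 0] unfolding coeff_prod_pochhammer_minus_two by simp
  then have S0: "S (\<lambda>_. 1) = 0" using P by simp
  have "S (\<lambda>k. coeff (dougall_poly x n k ^ 2) 1) = 2 * P^2 * S s"
    unfolding S_const[symmetric] by (rule S_cong) (rule W)
  then have "2 * P^2 * S s = A * (-2 * fact m)"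
    using coeffs[of 1] unfolding coeff_prod_pochhammer_minus_two by simp
  then have S1: "S s = - A * fact m / P^2" using P by (simp add: field_simps)
  have "S (\<lambda>k. coeff (dougall_poly x n k ^ 2) 2) = S (\<lambda>k. P^2 * (2 * s k ^ 2 - \<sigma>))"
    by (rule S_cong) (rule W)
  also have "\<dots> = P^2 * (2 * S (\<lambda>k. s k ^ 2) - \<sigma> * S (\<lambda>_. 1))"
    unfolding S_def by (simp add: sum_distrib_left sum_subtractf algebra_simps)
  finally have "P^2 * (2 * S (\<lambda>k. s k ^ 2) - \<sigma> * S (\<lambda>_. 1)) = A * (4 * fact m * Hx m 0)"
    using coeffs[of 2] unfolding coeff_prod_pochhammer_minus_two by simp
  then have S2: "S (\<lambda>k. s k ^ 2) = 2 * A * fact m * Hx m 0 / P^2" using P S0 by (simp add: field_simps)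
  from S0 S1 S2 show "(\<Sum>k=0..n. dougall_coeff x n k) = 0"
    "(\<Sum>k=0..n. dougall_coeff x n k * (2 * Hx k x - Hx n x)) = - A * fact m / P^2"
    "(\<Sum>k=0..n. dougall_coeff x n k * (2 * Hx k x - Hx n x) ^ 2) = 2 * A * fact m * Hx m 0 / P^2"
    unfolding S_def s_def by simp_all
qed

lemma sum_dougall_coeff_Hx_sq_generic:
  assumes n: "n = Suc m"
    and x2: "\<And>j. j \<le> 2 * n \<Longrightarrow> 2 + 2*x + of_nat j \<noteq> 0"
    and x1: "\<And>i. i < n \<Longrightarrow> x + 1 + of_nat i \<noteq> 0"
  shows "(\<Sum>k=0..n. dougall_coeff x n k * Hx k x ^ 2)
     = pochhammer (2*x + 1) n * fact m / (2 * pochhammer (x + 1) n ^ 2) * (Hx m 0 - Hx n x)"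
proof -
  define s where "s k = 2 * Hx k x - Hx n x" for k
  note moments = dougall_coeff_moments[OF n x2 x1, folded s_def]
  have "pochhammer (x + 1) n \<noteq> 0"
    by (rule pochhammer_neq_0_if) (use x1 in \<open>simp add: add_ac\<close>)
  have "(\<Sum>k=0..n. dougall_coeff x n k * Hx k x ^ 2)
      = (\<Sum>k=0..n. 1/4 * (dougall_coeff x n k * s k ^ 2) + Hx n x / 2 * (dougall_coeff x n k * s k)
          + Hx n x ^ 2 / 4 * dougall_coeff x n k)"
    by (rule sum.cong) (simp_all add: s_def power2_eq_square field_simps)
  also have "\<dots> = 1/4 * (\<Sum>k=0..n. dougall_coeff x n k * s k ^ 2)
          + Hx n x / 2 * (\<Sum>k=0..n. dougall_coeff x n k * s k)
          + Hx n x ^ 2 / 4 * (\<Sum>k=0..n. dougall_coeff x n k)"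
    by (simp add: sum.distrib sum_distrib_left)
  also have "\<dots> = pochhammer (2*x + 1) n * fact m / (2 * pochhammer (x + 1) n ^ 2) * (Hx m 0 - Hx n x)"
    using moments \<open>pochhammer (x + 1) n \<noteq> 0\<close> by (simp add: field_simps)
  finally show ?thesis .
qed

section \<open>Removing the genericity conditions\<close>

lemma tendsto_Hx_at:
  assumes "\<And>j. 1 \<le> j \<Longrightarrow> j \<le> k \<Longrightarrow> x + of_nat j \<noteq> (0 :: complex)"
  shows "((\<lambda>y. Hx k y) \<longlongrightarrow> Hx k x) (at x)"
  unfolding Hx_def by (intro tendsto_intros) (use assms in auto)

lemma eventually_at_generic:
  "eventually (\<lambda>y. (\<forall>j \<le> 2 * n. 2 + 2*y + of_nat j \<noteq> 0) \<and> (\<forall>i < n. y + 1 + of_nat i \<noteq> (0 :: complex)))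
     (at x)"
proof -
  define B :: "complex set" where "B = (\<lambda>j. - (2 + of_nat j) / 2) ` {..2 * n} \<union> (\<lambda>i. - (1 + of_nat i)) ` {..<n}"
  have "eventually (\<lambda>y. y \<notin> B) (at x)"
    by (rule eventually_at_notin_finite) (simp add: B_def)
  then show ?thesis
  proof eventually_elim
    case (elim y)
    have "2 + 2*y + of_nat j \<noteq> 0" if "j \<le> 2 * n" for j
    proof
      assume "2 + 2*y + of_nat j = 0"
      then have "2 * y = - (2 + of_nat j)" by algebra
      then have "y = - (2 + of_nat j) / 2" by (simp add: field_simps)
      with elim that show False unfolding B_def by auto
    qed
    moreover have "y + 1 + of_nat i \<noteq> 0" if "i < n" for i
      using elim that unfolding B_def by (auto simp: algebra_simps add_eq_0_iff)
    ultimately show ?case by blast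
  qed
qed

lemma sum_dougall_coeff_Hx_sq:
  assumes n: "n = Suc m"
    and den: "\<And>k. k \<le> n \<Longrightarrow> pochhammer (2*x + 1 + of_nat n) (Suc k) \<noteq> 0"
    and x1: "\<And>j. 1 \<le> j \<Longrightarrow> j \<le> n \<Longrightarrow> x + of_nat j \<noteq> 0"
  shows "(\<Sum>k=0..n. dougall_coeff x n k * Hx k x ^ 2)
     = pochhammer (2*x + 1) n * fact m / (2 * pochhammer (x + 1) n ^ 2) * (Hx m 0 - Hx n x)"
proof (rule eq_if_eventually_eq_at[where f = "\<lambda>y. \<Sum>k=0..n. dougall_coeff y n k * Hx k y ^ 2"])
  show "eventually (\<lambda>y. (\<Sum>k=0..n. dougall_coeff y n k * Hx k y ^ 2)
      = pochhammer (2*y + 1) n * fact m / (2 * pochhammer (y + 1) n ^ 2) * (Hx m 0 - Hx n y)) (at x)"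
    using eventually_at_generic[of n x]
  proof eventually_elim
    case (elim y)
    then show ?case by (intro sum_dougall_coeff_Hx_sq_generic[OF n]) auto
  qed
  have H: "((\<lambda>y. Hx k y) \<longlongrightarrow> Hx k x) (at x)" if "k \<le> n" for k
    by (rule tendsto_Hx_at) (use x1 that in auto)
  have "pochhammer (x + 1) n \<noteq> 0"
  proof (rule pochhammer_neq_0_if)
    show "x + 1 + of_nat i \<noteq> 0" if "i < n" for i
      using x1[of "Suc i"] that by (simp add: add_ac)
  qed
  then show "((\<lambda>y. pochhammer (2*y + 1) n * fact m / (2 * pochhammer (y + 1) n ^ 2) * (Hx m 0 - Hx n y))
      \<longlongrightarrow> pochhammer (2*x + 1) n * fact m / (2 * pochhammer (x + 1) n ^ 2) * (Hx m 0 - Hx n x)) (at x)"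
    by (intro tendsto_intros tendsto_pochhammer H) auto
  show "((\<lambda>y. \<Sum>k=0..n. dougall_coeff y n k * Hx k y ^ 2) \<longlongrightarrow> (\<Sum>k=0..n. dougall_coeff x n k * Hx k x ^ 2)) (at x)"
    unfolding dougall_coeff_def by (intro tendsto_intros tendsto_pochhammer H) (use den in auto)
qed

lemma gbinomial_ratio_eq_dougall_coeff:
  "(-1)^k * of_nat (n choose k)
     * (((2*x + of_nat k) gchoose k) / ((2*x + of_nat n + of_nat k) gchoose k))
     * ((1 + 2*x + 2 * of_nat k) / (1 + 2*x + of_nat n + of_nat k))
   = dougall_coeff x n k"
proof -
  have g1: "(2*x + of_nat k) gchoose k = pochhammer (2*x + 1) k / fact k"
    and g2: "(2*x + of_nat n + of_nat k) gchoose k = pochhammer (2*x + 1 + of_nat n) k / fact k"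
    by (simp_all add: gbinomial_pochhammer' algebra_simps)
  have p: "pochhammer (2*x + 1 + of_nat n) (Suc k)
      = (1 + 2*x + of_nat n + of_nat k) * pochhammer (2*x + 1 + of_nat n) k"
    by (simp add: pochhammer_rec' algebra_simps)
  show ?thesis
    unfolding dougall_coeff_def g1 g2 p by (simp add: field_simps)
qed

lemma gbinomial_ratio_eq_pochhammer_ratio:
  fixes x :: complex
  assumes n: "n = Suc m"
  shows "1 / (2 * of_nat n) * (((2*x + of_nat n) gchoose n) / ((x + of_nat n) gchoose n)^2)
     = pochhammer (2*x + 1) n * fact m / (2 * pochhammer (x + 1) n ^ 2)"
proof -
  have "fact n = (of_nat n * fact m :: complex)" unfolding n by simp
  then have "(2*x + of_nat n) gchoose n = pochhammer (2*x + 1) n / (of_nat n * fact m)"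
    "(x + of_nat n) gchoose n = pochhammer (x + 1) n / (of_nat n * fact m)"
    by (simp_all add: gbinomial_pochhammer')
  moreover have "1 / (2 * N) * ((A / (N * F)) / (B / (N * F))^2) = A * F / (2 * B^2)"
    if "N \<noteq> 0" "F \<noteq> 0" for A B N F :: complex
    using that by (cases "B = 0") (simp_all add: field_simps power2_eq_square)
  moreover have "(of_nat n :: complex) \<noteq> 0" "(fact m :: complex) \<noteq> 0" using n by (simp_all del: of_nat_Suc)
  ultimately show ?thesis by simp
qed

theorem theorem7:
  fixes n :: nat and x :: complex
  assumes "n \<ge> 1"
    and "\<And>j. 1 \<le> j \<Longrightarrow> j \<le> n \<Longrightarrow> x + of_nat j \<noteq> 0"
    and "\<And>k. k \<le> n \<Longrightarrow> (2*x + of_nat n + of_nat k) gchoose k \<noteq> 0"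
    and "\<And>k. k \<le> n \<Longrightarrow> 1 + 2*x + of_nat n + of_nat k \<noteq> 0"
    and "(x + of_nat n) gchoose n \<noteq> 0"
  shows "(\<Sum>k=0..n. (-1)^k * of_nat (n choose k)
            * (((2*x + of_nat k) gchoose k) / ((2*x + of_nat n + of_nat k) gchoose k))
            * ((1 + 2*x + 2 * of_nat k) / (1 + 2*x + of_nat n + of_nat k))
            * (Hx k x)^2)
       = 1 / (2 * of_nat n) * (((2*x + of_nat n) gchoose n) / ((x + of_nat n) gchoose n)^2)
           * (Hx (n - 1) 0 - Hx n x)"
proof -
  obtain m where n: "n = Suc m" using assms(1) by (cases n) auto
  have "pochhammer (2*x + 1 + of_nat n) (Suc k) \<noteq> 0" if "k \<le> n" for k
  proof -
    have "(2*x + of_nat n + of_nat k) gchoose k = pochhammer (2*x + 1 + of_nat n) k / fact k"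
      by (simp add: gbinomial_pochhammer' algebra_simps)
    with assms(3,4)[OF that] show ?thesis
      unfolding pochhammer_rec' by (simp add: add_ac)
  qed
  from sum_dougall_coeff_Hx_sq[OF n this assms(2)] show ?thesis
    unfolding gbinomial_ratio_eq_dougall_coeff gbinomial_ratio_eq_pochhammer_ratio[OF n]
    using n by simp
qed

end
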